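(* Let $(M,\mathcal T)$ be a closed pseudo 3-manifold which admits a zero-curvature generalized decorated metric. Let $l_0\in\mathbb R^E$ and write $l_0=w+l_0^\top$ with $w\in\mathbb R^V$ and $l_0^\top$ the orthogonal projection of $l_0$ to $\mathbb R^E/\widehat{\mathbb R^V}$. Then the solution $l(t)$ of the extended Ricci flow $\frac{d}{dt}l(t)=\widetilde K(l(t))$ with $l(0)=l_0$ satisfies $l(t)=w+l^\top(t)$ for all $t\in[0,\infty)$, where $l^\top(t)$ is the solution of the extended Ricci flow with initial data $l_0^\top$. Moreover, $l^\top(t)\in\mathbb R^E/\widehat{\mathbb R^V}$ for all $t\in[0,\infty)$.
   Context: Closed pseudo 3-manifold $(M,\mathcal T)$: quotient of a disjoint union $\mathscr T$ of finitely many tetrahedra by affine isomorphisms pairing faces, every 2-face being paired with another; $V,E$ are the sets of vertex and edge classes. For a tetrahedron $\sigma$ with vertices $v_1,\dots,v_4$ and $l\in\mathbb R^E$, $l_\sigma=(l_{ij})\in\mathbb R^6$, $l_{ij}=l(\text{class of } v_iv_j)$. Extended dihedral angles: for $(x_1,x_2,x_3)\in\mathbb R^3_{>0}$, $a_i$ is the Euclidean angle opposite $x_i$ if strict triangle inequalities hold, and $a_i=\pi$, $a_j=a_k=0$ if $x_i\ge x_j+x_k$. For $l\in\mathbb R^6$, $\{i,j,k,h\}=\{1,2,3,4\}$, $\alpha_{ij}(l)$ is the generalized angle opposite the side $e^{(l_{ij}+l_{kh})/2}$ in the generalized triangle with sides $e^{(l_{ij}+l_{kh})/2},e^{(l_{ik}+l_{jh})/2},e^{(l_{ih}+l_{jk})/2}$.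 A generalized decorated metric is any $l\in\mathbb R^E$; its generalized Ricci curvature is $\widetilde K_e(l)=2\pi-\sum\alpha_{ij}(l_\sigma)$ over pairs (tetrahedron $\sigma$, edge $v_iv_j$ of $\sigma$ in class $e$); it is zero-curvature if $\widetilde K(l)=0$. $\mathbb R^V$ acts on $\mathbb R^E$ by $(w+l)_e=l_e+w(e_+)+w(e_-)$ with $e_\pm$ the endpoints of $e$; $\widehat{\mathbb R^V}=\{w+0:w\in\mathbb R^V\}$ and $\mathbb R^E/\widehat{\mathbb R^V}$ denotes its orthogonal complement in $\mathbb R^E$ (standard inner product). *)

theory Defs
  imports "HOL-Analysis.Analysis"
begin

text \<open>Tetrahedra are indexed by elements of a finite set T :: 't set; the vertices of
each tetrahedron are numbered 0,1,2,3.  The face (sigma,i) is the face of sigma opposite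
to vertex i.  A face pairing P assigns to every face (sigma,i) a partner face (tau,j) and a
bijection f from the vertices of face (sigma,i) onto the vertices of face (tau,j)
(this determines the affine isomorphism of the faces).  P sigma i = (tau, j, f).\<close>

type_synonym 't pairing = "'t \<Rightarrow> nat \<Rightarrow> 't \<times> nat \<times> (nat \<Rightarrow> nat)"

definition ptet :: "'t pairing \<Rightarrow> 't \<Rightarrow> nat \<Rightarrow> 't" where
  "ptet P \<sigma> i = fst (P \<sigma> i)"
definition pface :: "'t pairing \<Rightarrow> 't \<Rightarrow> nat \<Rightarrow> nat" where
  "pface P \<sigma> i = fst (snd (P \<sigma> i))"
definition pmap :: "'t pairing \<Rightarrow> 't \<Rightarrow> nat \<Rightarrow> nat \<Rightarrow> nat" where
  "pmap P \<sigma> i = snd (snd (P \<sigma> i))"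

definition closed_pseudo_3_manifold :: "'t set \<Rightarrow> 't pairing \<Rightarrow> bool" where
  "closed_pseudo_3_manifold T P \<longleftrightarrow> finite T \<and>
     (\<forall>\<sigma>\<in>T. \<forall>i<4.
        ptet P \<sigma> i \<in> T \<and> pface P \<sigma> i < 4 \<and>
        (ptet P \<sigma> i, pface P \<sigma> i) \<noteq> (\<sigma>, i) \<and>
        bij_betw (pmap P \<sigma> i) ({..<4} - {i}) ({..<4} - {pface P \<sigma> i}) \<and>
        ptet P (ptet P \<sigma> i) (pface P \<sigma> i) = \<sigma> \<and>
        pface P (ptet P \<sigma> i) (pface P \<sigma> i) = i \<and>
        (\<forall>a\<in>{..<4} - {i}. pmap P (ptet P \<sigma> i) (pface P \<sigma> i) (pmap P \<sigma> i a) = a))"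

definition vgen :: "'t set \<Rightarrow> 't pairing \<Rightarrow> (('t \<times> nat) \<times> ('t \<times> nat)) set" where
  "vgen T P = {((\<sigma>, a), (ptet P \<sigma> i, pmap P \<sigma> i a)) | \<sigma> i a.
                 \<sigma> \<in> T \<and> i < 4 \<and> a < 4 \<and> a \<noteq> i}"

definition vrel :: "'t set \<Rightarrow> 't pairing \<Rightarrow> (('t \<times> nat) \<times> ('t \<times> nat)) set" where
  "vrel T P = (vgen T P \<union> (vgen T P)\<inverse>)\<^sup>*"

definition Verts :: "'t set \<Rightarrow> 't pairing \<Rightarrow> ('t \<times> nat) set set" where
  "Verts T P = (T \<times> {..<4}) // vrel T P"

definition vclass :: "'t set \<Rightarrow> 't pairing \<Rightarrow> 't \<Rightarrow> nat \<Rightarrow> ('t \<times> nat) set" where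
  "vclass T P \<sigma> a = vrel T P `` {(\<sigma>, a)}"

definition tet_edges :: "nat set set" where
  "tet_edges = {s. s \<subseteq> {..<4} \<and> card s = 2}"

definition egen :: "'t set \<Rightarrow> 't pairing \<Rightarrow> (('t \<times> nat set) \<times> ('t \<times> nat set)) set" where
  "egen T P = {((\<sigma>, {a, b}), (ptet P \<sigma> i, {pmap P \<sigma> i a, pmap P \<sigma> i b})) | \<sigma> i a b.
                 \<sigma> \<in> T \<and> i < 4 \<and> a < 4 \<and> b < 4 \<and> a \<noteq> b \<and> a \<noteq> i \<and> b \<noteq> i}"

definition erel :: "'t set \<Rightarrow> 't pairing \<Rightarrow> (('t \<times> nat set) \<times> ('t \<times> nat set)) set" where
  "erel T P = (egen T P \<union> (egen T P)\<inverse>)\<^sup>*"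

definition Edges :: "'t set \<Rightarrow> 't pairing \<Rightarrow> ('t \<times> nat set) set set" where
  "Edges T P = (T \<times> tet_edges) // erel T P"

definition eclass :: "'t set \<Rightarrow> 't pairing \<Rightarrow> 't \<Rightarrow> nat set \<Rightarrow> ('t \<times> nat set) set" where
  "eclass T P \<sigma> s = erel T P `` {(\<sigma>, s)}"

text \<open>Elements of R^E are functions on edge classes (only values on Edges T P matter);
elements of R^V are functions on vertex classes.\<close>
type_synonym 't emetric = "('t \<times> nat set) set \<Rightarrow> real"
type_synonym 't vweight = "('t \<times> nat) set \<Rightarrow> real"

text \<open>The action (w + l)_e = l_e + w(e_+) + w(e_-), computed from a representative
(sigma, {a,b}) of the edge class e (endpoints e_pm are the vertex classes of a and b).\<close>
definition vact :: "'t set \<Rightarrow> 't pairing \<Rightarrow> 't vweight \<Rightarrow> 't emetric \<Rightarrow> 't emetric" where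
  "vact T P w l e = l e +
     (let x = (SOME x. x \<in> e) in \<Sum>a\<in>snd x. w (vclass T P (fst x) a))"

text \<open>Membership in R^E / \<widehat>{R^V}, i.e. the orthogonal complement of
{w + 0 : w in R^V} in R^E for the standard inner product.\<close>
definition in_quot_space :: "'t set \<Rightarrow> 't pairing \<Rightarrow> 't emetric \<Rightarrow> bool" where
  "in_quot_space T P l \<longleftrightarrow>
     (\<forall>w :: 't vweight. (\<Sum>e\<in>Edges T P. l e * vact T P w (\<lambda>_. 0) e) = 0)"

definition ext_angle :: "real \<Rightarrow> real \<Rightarrow> real \<Rightarrow> real" where
  "ext_angle x1 x2 x3 =
     (if x1 \<ge> x2 + x3 then pi
      else if x2 \<ge> x1 + x3 \<or> x3 \<ge> x1 + x2 then 0
      else arccos ((x2\<^sup>2 + x3\<^sup>2 - x1\<^sup>2) / (2 * x2 * x3)))"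

definition gen_dihedral :: "(nat set \<Rightarrow> real) \<Rightarrow> nat set \<Rightarrow> real" where
  "gen_dihedral L s =
     (let i = Min s; j = Max s; c = {..<4} - s; k = Min c; h = Max c in
        ext_angle (exp ((L {i, j} + L {k, h}) / 2))
                  (exp ((L {i, k} + L {j, h}) / 2))
                  (exp ((L {i, h} + L {j, k}) / 2)))"

definition tet_metric :: "'t set \<Rightarrow> 't pairing \<Rightarrow> 't emetric \<Rightarrow> 't \<Rightarrow> nat set \<Rightarrow> real" where
  "tet_metric T P l \<sigma> s = l (eclass T P \<sigma> s)"

definition gen_curv :: "'t set \<Rightarrow> 't pairing \<Rightarrow> 't emetric \<Rightarrow> 't emetric" where
  "gen_curv T P l e = 2 * pi -
     (\<Sum>(\<sigma>, s) \<in> {(\<sigma>, s). \<sigma> \<in> T \<and> s \<in> tet_edges \<and> eclass T P \<sigma> s = e}.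
        gen_dihedral (tet_metric T P l \<sigma>) s)"

definition zero_curvature :: "'t set \<Rightarrow> 't pairing \<Rightarrow> 't emetric \<Rightarrow> bool" where
  "zero_curvature T P l \<longleftrightarrow> (\<forall>e\<in>Edges T P. gen_curv T P l e = 0)"

definition ext_ricci_flow_solution ::
  "'t set \<Rightarrow> 't pairing \<Rightarrow> (real \<Rightarrow> 't emetric) \<Rightarrow> 't emetric \<Rightarrow> bool" where
  "ext_ricci_flow_solution T P l l0 \<longleftrightarrow>
     (\<forall>e\<in>Edges T P. l 0 e = l0 e) \<and>
     (\<forall>e\<in>Edges T P. \<forall>t\<ge>0.
        ((\<lambda>s. l s e) has_real_derivative gen_curv T P (l t) e) (at t within {0..}))"

end

theory Submission
  imports Defs
begin

(* Each extended dihedral angle alpha_ij of a tetrahedron is an angle of the generalized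
   triangle with sides e^((l_ij + l_kh)/2), e^((l_ik + l_jh)/2), e^((l_ih + l_jk)/2).

   Adding w in R^V to l multiplies all three sides of each such triangle by the same factor
   e^((w(v_1) + ... + w(v_4))/2), which does not change its angles; hence K~(w + l) = K~(l),
   and t |-> w + l^T(t) solves the flow with initial value l_0.  In logarithmic side lengths
   the angles of a triangle form a monotone map (its Jacobian is positive semidefinite at
   nondegenerate triangles, and it is locally constant at degenerate ones), so
   <K~(x) - K~(y), x - y> <= 0.  Therefore the squared distance between two solutions of the
   flow does not increase, and the solution starting at l_0 is w + l^T(t).

   Since the angles of a triangle sum to pi, the angles of a tetrahedron weighted by
   w(v_i) + w(v_j) sum to pi (w(v_1) + ... + w(v_4)) for all edge lengths.  So <K~(l), w + 0>
   does not depend on l, and it vanishes because some l has zero curvature; hence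
   <l^T(t), w + 0> is constant along the flow and stays 0. *)

section \<open>Elementary real analysis\<close>

lemma quadratic_form_nonneg:
  fixes p q r y z :: real
  assumes "p + r > 0" "p * q + q * r + r * p \<ge> 0"
  shows "p * y\<^sup>2 + q * z\<^sup>2 + r * (z - y)\<^sup>2 \<ge> 0"
proof -
  have "(p + r) * (p * y\<^sup>2 + q * z\<^sup>2 + r * (z - y)\<^sup>2)
      = ((p + r) * y - r * z)\<^sup>2 + (p * q + q * r + r * p) * z\<^sup>2"
    by algebra
  moreover have "((p + r) * y - r * z)\<^sup>2 + (p * q + q * r + r * p) * z\<^sup>2 \<ge> 0"
    using assms(2) by simp
  ultimately have "(p + r) * (p * y\<^sup>2 + q * z\<^sup>2 + r * (z - y)\<^sup>2) \<ge> 0"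
    by linarith
  then show ?thesis
    using assms(1) by (simp add: zero_le_mult_iff)
qed

lemma convex_on_exp_affine: "convex_on UNIV (\<lambda>s::real. exp (p + s * q))"
proof (rule convex_onI)
  fix t x y :: real
  assume t: "0 < t" "t < 1"
  have "p + ((1 - t) *\<^sub>R x + t *\<^sub>R y) * q = (1 - t) * (p + x * q) + t * (p + y * q)"
    by (simp add: algebra_simps)
  then show "exp (p + ((1 - t) *\<^sub>R x + t *\<^sub>R y) * q) \<le> (1 - t) * exp (p + x * q) + t * exp (p + y * q)"
    using convex_onD[OF exp_convex, of t "p + x * q" "p + y * q"] t by simp
qed simp

lemma convex_sublevel_set:
  assumes "convex_on S f"
  shows "convex {x \<in> S. f x \<le> c}"
  unfolding convex_def
proof (intro ballI allI impI)
  fix x y and u v :: real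
  assume "x \<in> {x \<in> S. f x \<le> c}" "y \<in> {x \<in> S. f x \<le> c}" "0 \<le> u" "0 \<le> v" "u + v = 1"
  then show "u *\<^sub>R x + v *\<^sub>R y \<in> {x \<in> S. f x \<le> c}"
    using convex_lower[OF assms, of x y u v] convex_on_imp_convex[OF assms]
    by (auto simp: convex_def)
qed

lemma interval_mem_interior:
  fixes E :: "real set"
  assumes "is_interval E" "bounded E" "x \<in> E" "x \<notin> {Inf E, Sup E}"
  shows "x \<in> interior E"
proof -
  have ne: "E \<noteq> {}"
    using assms(3) by blast
  have bdd: "bdd_below E" "bdd_above E"
    using assms(2) by (rule bounded_imp_bdd_below, rule bounded_imp_bdd_above)
  have "Inf E < x"
    using cInf_lower[OF assms(3) bdd(1)] assms(4) by simp
  then obtain a where a: "a \<in> E" "a < x"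
    using cInf_less_iff[OF ne bdd(1)] by blast
  have "x < Sup E"
    using cSup_upper[OF assms(3) bdd(2)] assms(4) by simp
  then obtain b where b: "b \<in> E" "x < b"
    using less_cSup_iff[OF ne bdd(2)] by blast
  have "{a<..<b} \<subseteq> E"
    using assms(1) a(1) b(1) unfolding is_interval_1 by (meson greaterThanLessThan_iff less_imp_le subsetI)
  then have "{a<..<b} \<subseteq> interior E"
    by (rule interior_maximal) simp
  then show ?thesis
    using a b by auto
qed

lemma DERIV_zero_if_const_on:
  fixes f :: "real \<Rightarrow> real"
  assumes "x \<in> interior S" "\<And>s. s \<in> S \<Longrightarrow> f s = c"
  shows "(f has_real_derivative 0) (at x)"
  by (rule has_field_derivative_transform_within_open[of "\<lambda>_. c" 0 x "interior S"])
    (use assms interior_subset in auto)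

lemma nondecreasing_if_deriv_nonneg_off_finite:
  fixes g :: "real \<Rightarrow> real"
  assumes "a \<le> b" "finite S" "continuous_on {a..b} g"
    and deriv: "\<And>x. x \<in> {a<..<b} - S \<Longrightarrow> \<exists>D \<ge> 0. (g has_real_derivative D) (at x)"
  shows "g a \<le> g b"
proof -
  define g' where "g' x = (if x \<in> {a<..<b} - S then deriv g x else 0)" for x
  have "(g' has_integral (g b - g a)) {a..b}"
  proof (rule fundamental_theorem_of_calculus_interior_strong[OF assms(2,1) _ assms(3)])
    fix x
    assume x: "x \<in> {a<..<b} - S"
    then obtain D where "(g has_real_derivative D) (at x)"
      using deriv by blast
    moreover from this have "deriv g x = D"
      by (rule DERIV_imp_deriv)
    ultimately show "(g has_vector_derivative g' x) (at x)"
      using x by (simp add: g'_def has_real_derivative_iff_has_vector_derivative)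
  qed
  moreover have "g' x \<ge> 0" for x
  proof (cases "x \<in> {a<..<b} - S")
    case True
    then obtain D where "D \<ge> 0" and D: "(g has_real_derivative D) (at x)"
      using deriv by blast
    then show ?thesis
      using True DERIV_imp_deriv[OF D] unfolding g'_def by simp
  qed (auto simp: g'_def)
  ultimately have "g b - g a \<ge> 0"
    by (rule has_integral_nonneg)
  then show ?thesis
    by simp
qed

lemma nonincreasing_if_deriv_nonpos:
  fixes f f' :: "real \<Rightarrow> real"
  assumes "a \<le> b"
    and "\<And>x. x \<in> {a..b} \<Longrightarrow> (f has_real_derivative f' x) (at x within {a..b})"
    and "\<And>x. x \<in> {a..b} \<Longrightarrow> f' x \<le> 0"
  shows "f b \<le> f a"
proof -
  have "\<exists>x\<in>{a..b}. f b - f a = (\<lambda>h. f' x * h) (b - a)"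
  proof (rule mvt_very_simple[OF assms(1)])
    fix x
    assume "a \<le> x" "x \<le> b"
    then show "(f has_derivative (\<lambda>h. f' x * h)) (at x within {a..b})"
      using assms(2)[of x] by (simp add: has_field_derivative_def)
  qed
  then obtain x where "x \<in> {a..b}" "f b - f a = f' x * (b - a)"
    by auto
  moreover have "f' x * (b - a) \<le> 0"
    using assms(1,3) \<open>x \<in> {a..b}\<close> by (simp add: mult_nonpos_nonneg)
  ultimately show ?thesis
    by simp
qed

section \<open>Euclidean triangles\<close>

definition cos_angle :: "real \<Rightarrow> real \<Rightarrow> real \<Rightarrow> real" where
  "cos_angle x1 x2 x3 = (x2\<^sup>2 + x3\<^sup>2 - x1\<^sup>2) / (2 * x2 * x3)"

(* Sixteen times the squared area, by Heron's formula. *)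
definition heron :: "real \<Rightarrow> real \<Rightarrow> real \<Rightarrow> real" where
  "heron a b c = 2 * (a\<^sup>2 * b\<^sup>2 + b\<^sup>2 * c\<^sup>2 + c\<^sup>2 * a\<^sup>2) - (a^4 + b^4 + c^4)"

lemma heron_factorization: "heron a b c = (a + b + c) * (- a + b + c) * (a - b + c) * (a + b - c)"
  unfolding heron_def by algebra

lemma heron_commute: "heron b a c = heron a b c" "heron c a b = heron a b c"
  unfolding heron_def by algebra+

lemma heron_pos:
  assumes "a > 0" "b > 0" "c > 0" "a < b + c" "b < a + c" "c < a + b"
  shows "heron a b c > 0"
  unfolding heron_factorization using assms by (intro mult_pos_pos) auto

lemma sqrt_one_minus_cos_angle_sq:
  assumes "b > 0" "c > 0"
  shows "sqrt (1 - (cos_angle a b c)\<^sup>2) = sqrt (heron a b c) / (2 * b * c)"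
proof -
  have "1 - (cos_angle a b c)\<^sup>2 = heron a b c / (2 * b * c)\<^sup>2"
    using assms unfolding cos_angle_def heron_def
    by (simp add: field_simps power2_eq_square) algebra
  then show ?thesis
    using assms by (simp add: real_sqrt_divide)
qed

lemma cos_angle_bounds:
  assumes "a > 0" "b > 0" "c > 0" "a < b + c" "b < a + c" "c < a + b"
  shows "-1 < cos_angle a b c" "cos_angle a b c < 1"
proof -
  have "sqrt (1 - (cos_angle a b c)\<^sup>2) > 0"
    using sqrt_one_minus_cos_angle_sq[of b c a] heron_pos[OF assms] assms by simp
  then have "\<bar>cos_angle a b c\<bar> < 1"
    by (metis abs_square_less_1 diff_gt_0_iff_gt real_sqrt_gt_0_iff)
  then show "-1 < cos_angle a b c" "cos_angle a b c < 1" by auto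
qed

lemma ext_angle_nondegenerate:
  assumes "x1 < x2 + x3" "x2 < x1 + x3" "x3 < x1 + x2"
  shows "ext_angle x1 x2 x3 = arccos (cos_angle x1 x2 x3)"
  using assms unfolding ext_angle_def cos_angle_def by auto

(* Outside the nondegenerate range the cosine law leaves [-1, 1], so clamping it
   gives a formula for the extended angle that is visibly continuous. *)
lemma ext_angle_eq_arccos_clamp:
  assumes "a > 0" "b > 0" "c > 0"
  shows "ext_angle a b c = arccos (max (-1) (min 1 (cos_angle a b c)))"
proof (cases "a \<ge> b + c")
  case True
  have "(b + c)\<^sup>2 \<le> a\<^sup>2"
    using True assms by (intro power_mono) auto
  then have "cos_angle a b c \<le> -1"
    using assms unfolding cos_angle_def by (simp add: divide_le_eq power2_eq_square algebra_simps)
  then show ?thesis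
    using True unfolding ext_angle_def by simp
next
  case not_obtuse: False
  show ?thesis
  proof (cases "b \<ge> a + c \<or> c \<ge> a + b")
    case True
    then have "a\<^sup>2 \<le> (b - c)\<^sup>2 \<or> a\<^sup>2 \<le> (c - b)\<^sup>2"
      using assms by (auto intro: power_mono)
    then have "cos_angle a b c \<ge> 1"
      using assms unfolding cos_angle_def by (auto simp: le_divide_eq power2_eq_square algebra_simps)
    then show ?thesis
      using True not_obtuse unfolding ext_angle_def by simp
  next
    case False
    then show ?thesis
      using not_obtuse assms cos_angle_bounds[of a b c] ext_angle_nondegenerate[of a b c] by simp
  qed
qed

lemma arccos_cos_angle_sum:
  assumes "a > 0" "b > 0" "c > 0" "a < b + c" "b < a + c" "c < a + b"
  shows "arccos (cos_angle a b c) + arccos (cos_angle b a c) + arccos (cos_angle c a b) = pi"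
proof -
  define c1 c2 c3 where "c1 = cos_angle a b c" and "c2 = cos_angle b a c" and "c3 = cos_angle c a b"
  have b1: "-1 < c1" "c1 < 1" and b2: "-1 < c2" "c2 < 1" and b3: "-1 < c3" "c3 < 1"
    unfolding c1_def c2_def c3_def using cos_angle_bounds assms by (auto simp: add.commute)
  have s1: "sin (arccos c1) = sqrt (heron a b c) / (2 * b * c)"
    using b1 sin_arccos_abs[of c1] sqrt_one_minus_cos_angle_sq[of b c a] assms
    unfolding c1_def by simp
  have s2: "sin (arccos c2) = sqrt (heron a b c) / (2 * a * c)"
    using b2 sin_arccos_abs[of c2] sqrt_one_minus_cos_angle_sq[of a c b] assms heron_commute
    unfolding c2_def by simp
  have "cos (arccos c1 + arccos c2) = c1 * c2 - heron a b c / (4 * a * b * c\<^sup>2)"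
    using b1 b2 s1 s2 heron_pos[OF assms] by (simp add: cos_add power2_eq_square field_simps)
  also have "\<dots> = - c3"
    unfolding c1_def c2_def c3_def cos_angle_def heron_def using assms
    by (simp add: field_simps power2_eq_square) algebra
  finally have cos_sum: "cos (arccos c1 + arccos c2) = - c3" .
  have "\<bar>a - b\<bar> < c"
    using assms by auto
  then have "(a - b)\<^sup>2 < c\<^sup>2"
    using power_strict_mono[of "\<bar>a - b\<bar>" c 2] by simp
  moreover have "c1 + c2 = (a + b) * (c\<^sup>2 - (a - b)\<^sup>2) / (2 * a * b * c)"
    unfolding c1_def c2_def cos_angle_def using assms by (simp add: field_simps power2_eq_square)
  ultimately have "c1 + c2 > 0"
    using assms by simp
  then have "arccos c1 + arccos c2 < pi"
    using arccos_less_arccos[of "- c2" c1] arccos_minus[of c2] b1 b2 by simp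
  moreover have "0 \<le> arccos c1 + arccos c2"
    using arccos_lbound b1 b2 by (simp add: add_nonneg_nonneg)
  ultimately have "arccos c1 + arccos c2 = arccos (cos (arccos c1 + arccos c2))"
    by (simp add: arccos_cos)
  also have "\<dots> = pi - arccos c3"
    using cos_sum arccos_minus[of c3] b3 by simp
  finally show ?thesis
    unfolding c1_def c2_def c3_def by simp
qed

lemma ext_angle_sum:
  assumes "a > 0" "b > 0" "c > 0"
  shows "ext_angle a b c + ext_angle b a c + ext_angle c a b = pi"
proof (cases "a < b + c \<and> b < a + c \<and> c < a + b")
  case True
  then show ?thesis
    using arccos_cos_angle_sum[OF assms] ext_angle_nondegenerate by (auto simp: add.commute)
next
  case False
  then show ?thesis
    using assms unfolding ext_angle_def by (auto simp: add.commute)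
qed

lemma ext_angle_scale:
  assumes "k > 0"
  shows "ext_angle (k * a) (k * b) (k * c) = ext_angle a b c"
proof -
  have "((k * b)\<^sup>2 + (k * c)\<^sup>2 - (k * a)\<^sup>2) / (2 * (k * b) * (k * c))
      = (k * k * (b\<^sup>2 + c\<^sup>2 - a\<^sup>2)) / (k * k * (2 * b * c))"
    by (simp add: power2_eq_square algebra_simps)
  also have "\<dots> = (b\<^sup>2 + c\<^sup>2 - a\<^sup>2) / (2 * b * c)"
    using assms by simp
  finally show ?thesis
    using assms unfolding ext_angle_def by (simp add: distrib_left[symmetric])
qed

section \<open>The angle map in logarithmic side lengths\<close>

definition tri_angle :: "real \<Rightarrow> real \<Rightarrow> real \<Rightarrow> real" where
  "tri_angle u1 u2 u3 = ext_angle (exp u1) (exp u2) (exp u3)"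

lemma tri_angle_sum: "tri_angle u1 u2 u3 + tri_angle u2 u1 u3 + tri_angle u3 u1 u2 = pi"
  unfolding tri_angle_def by (rule ext_angle_sum) auto

lemma tri_angle_shift: "tri_angle (u1 + t) (u2 + t) (u3 + t) = tri_angle u1 u2 u3"
  unfolding tri_angle_def exp_add
  using ext_angle_scale[of "exp t" "exp u1" "exp u2" "exp u3"] by (simp add: mult.commute)

lemma is_interval_degenerate:
  "is_interval {s::real. exp (vb + s * db) + exp (vc + s * dc) \<le> exp (va + s * da)}"
proof -
  have iff: "exp B + exp C \<le> exp A \<longleftrightarrow> exp (B - A) + exp (C - A) \<le> 1" for A B C :: real
    by (simp add: exp_diff add_divide_distrib[symmetric] divide_le_eq)
  have "{s. exp (vb + s * db) + exp (vc + s * dc) \<le> exp (va + s * da)}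
      = {s \<in> UNIV. exp ((vb - va) + s * (db - da)) + exp ((vc - va) + s * (dc - da)) \<le> 1}"
    unfolding iff by (simp add: algebra_simps)
  also have "convex \<dots>"
    by (intro convex_sublevel_set convex_on_add convex_on_exp_affine)
  finally show ?thesis
    by (simp add: is_interval_convex_1)
qed

lemma has_real_derivative_arccos_cos_angle:
  fixes va vb vc da db dc s :: real
  defines "x1 \<equiv> exp (va + s * da)" and "x2 \<equiv> exp (vb + s * db)" and "x3 \<equiv> exp (vc + s * dc)"
  assumes "x1 < x2 + x3" "x2 < x1 + x3" "x3 < x1 + x2"
  shows "((\<lambda>s. arccos (cos_angle (exp (va + s * da)) (exp (vb + s * db)) (exp (vc + s * dc))))
          has_real_derivative
            ((2 * da - db - dc) * x1\<^sup>2 - (db - dc) * (x2\<^sup>2 - x3\<^sup>2)) / sqrt (heron x1 x2 x3)) (at s)"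
proof -
  have pos: "x1 > 0" "x2 > 0" "x3 > 0"
    unfolding x1_def x2_def x3_def by auto
  define C' where "C' = ((2 * db * x2\<^sup>2 + 2 * dc * x3\<^sup>2 - 2 * da * x1\<^sup>2) * (2 * x2 * x3)
      - (x2\<^sup>2 + x3\<^sup>2 - x1\<^sup>2) * (2 * (db + dc) * x2 * x3)) / (2 * x2 * x3)\<^sup>2"
  have cos_deriv: "((\<lambda>s. cos_angle (exp (va + s * da)) (exp (vb + s * db)) (exp (vc + s * dc)))
      has_real_derivative C') (at s)"
    unfolding cos_angle_def C'_def x1_def x2_def x3_def
    by (rule derivative_eq_intros refl | simp)+ (simp add: power2_eq_square field_simps exp_add[symmetric])
  have "-1 < cos_angle x1 x2 x3" "cos_angle x1 x2 x3 < 1"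
    using cos_angle_bounds[OF pos assms(4-6)] by auto
  from DERIV_chain2[OF DERIV_arccos[OF this, unfolded x1_def x2_def x3_def] cos_deriv]
  have "((\<lambda>s. arccos (cos_angle (exp (va + s * da)) (exp (vb + s * db)) (exp (vc + s * dc))))
      has_real_derivative inverse (- sqrt (1 - (cos_angle x1 x2 x3)\<^sup>2)) * C') (at s)"
    unfolding x1_def x2_def x3_def by simp
  moreover have "inverse (- sqrt (1 - (cos_angle x1 x2 x3)\<^sup>2)) * C'
      = ((2 * da - db - dc) * x1\<^sup>2 - (db - dc) * (x2\<^sup>2 - x3\<^sup>2)) / sqrt (heron x1 x2 x3)"
    unfolding sqrt_one_minus_cos_angle_sq[OF pos(2,3)] C'_def
    using pos heron_pos[OF pos assms(4-6)] by (simp add: field_simps power2_eq_square)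
  ultimately show ?thesis
    by simp
qed

(* For the angle map theta(u) = (tri_angle u1 u2 u3, tri_angle u2 u1 u3, tri_angle u3 u1 u2),
   this is s |-> <theta(v + s d), d>; its derivative is the Jacobian quadratic form at d. *)
definition angle_pairing :: "real \<Rightarrow> real \<Rightarrow> real \<Rightarrow> real \<Rightarrow> real \<Rightarrow> real \<Rightarrow> real \<Rightarrow> real" where
  "angle_pairing v1 v2 v3 d1 d2 d3 s =
     d1 * tri_angle (v1 + s * d1) (v2 + s * d2) (v3 + s * d3)
   + d2 * tri_angle (v2 + s * d2) (v1 + s * d1) (v3 + s * d3)
   + d3 * tri_angle (v3 + s * d3) (v1 + s * d1) (v2 + s * d2)"

lemma continuous_on_angle_pairing: "continuous_on UNIV (angle_pairing v1 v2 v3 d1 d2 d3)"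
proof -
  have tri_angle_clamp: "tri_angle (a + s * b) (c + s * d) (e + s * f)
      = arccos (max (-1) (min 1 (cos_angle (exp (a + s * b)) (exp (c + s * d)) (exp (e + s * f)))))"
    for a b c d e f s
    unfolding tri_angle_def by (simp add: ext_angle_eq_arccos_clamp)
  show ?thesis
    unfolding angle_pairing_def[abs_def] tri_angle_clamp cos_angle_def
    by (intro continuous_intros) auto
qed

lemma angle_pairing_degenerate:
  fixes v1 v2 v3 d1 d2 d3 s :: real
  defines "x1 \<equiv> exp (v1 + s * d1)" and "x2 \<equiv> exp (v2 + s * d2)" and "x3 \<equiv> exp (v3 + s * d3)"
  shows "x2 + x3 \<le> x1 \<Longrightarrow> angle_pairing v1 v2 v3 d1 d2 d3 s = d1 * pi"
    and "x1 + x3 \<le> x2 \<Longrightarrow> angle_pairing v1 v2 v3 d1 d2 d3 s = d2 * pi"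
    and "x1 + x2 \<le> x3 \<Longrightarrow> angle_pairing v1 v2 v3 d1 d2 d3 s = d3 * pi"
proof -
  have "x1 > 0" "x2 > 0" "x3 > 0"
    unfolding x1_def x2_def x3_def by auto
  then show "x2 + x3 \<le> x1 \<Longrightarrow> angle_pairing v1 v2 v3 d1 d2 d3 s = d1 * pi"
    and "x1 + x3 \<le> x2 \<Longrightarrow> angle_pairing v1 v2 v3 d1 d2 d3 s = d2 * pi"
    and "x1 + x2 \<le> x3 \<Longrightarrow> angle_pairing v1 v2 v3 d1 d2 d3 s = d3 * pi"
    unfolding angle_pairing_def tri_angle_def ext_angle_def x1_def[symmetric] x2_def[symmetric] x3_def[symmetric]
    by auto
qed

lemma angle_jacobian_form_nonneg:
  fixes x1 x2 x3 d1 d2 d3 :: real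
  assumes "x1 > 0" "x2 > 0" "x3 > 0" "x1 < x2 + x3" "x2 < x1 + x3" "x3 < x1 + x2"
  shows "d1 * ((2 * d1 - d2 - d3) * x1\<^sup>2 - (d2 - d3) * (x2\<^sup>2 - x3\<^sup>2))
    + d2 * ((2 * d2 - d1 - d3) * x2\<^sup>2 - (d1 - d3) * (x1\<^sup>2 - x3\<^sup>2))
    + d3 * ((2 * d3 - d1 - d2) * x3\<^sup>2 - (d1 - d2) * (x1\<^sup>2 - x2\<^sup>2)) \<ge> 0"
proof -
  define p q r where "p = x2\<^sup>2 + x3\<^sup>2 - x1\<^sup>2" and "q = x1\<^sup>2 + x3\<^sup>2 - x2\<^sup>2"
    and "r = x1\<^sup>2 + x2\<^sup>2 - x3\<^sup>2"
  have "p * q + q * r + r * p = heron x1 x2 x3"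
    unfolding p_def q_def r_def heron_def by algebra
  then have "p * (d2 - d3)\<^sup>2 + q * (d1 - d3)\<^sup>2 + r * ((d1 - d3) - (d2 - d3))\<^sup>2 \<ge> 0"
    using heron_pos[OF assms] assms(2) by (intro quadratic_form_nonneg) (simp_all add: p_def r_def)
  then show ?thesis
    unfolding p_def q_def r_def by (simp add: algebra_simps power2_eq_square)
qed

lemma angle_pairing_deriv_nondegenerate:
  fixes v1 v2 v3 d1 d2 d3 x :: real
  defines "x1 \<equiv> exp (v1 + x * d1)" and "x2 \<equiv> exp (v2 + x * d2)" and "x3 \<equiv> exp (v3 + x * d3)"
  assumes "x1 < x2 + x3" "x2 < x1 + x3" "x3 < x1 + x2"
  shows "\<exists>D \<ge> 0. (angle_pairing v1 v2 v3 d1 d2 d3 has_real_derivative D) (at x)"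
proof -
  define G where "G s =
      d1 * arccos (cos_angle (exp (v1 + s * d1)) (exp (v2 + s * d2)) (exp (v3 + s * d3)))
    + d2 * arccos (cos_angle (exp (v2 + s * d2)) (exp (v1 + s * d1)) (exp (v3 + s * d3)))
    + d3 * arccos (cos_angle (exp (v3 + s * d3)) (exp (v1 + s * d1)) (exp (v2 + s * d2)))" for s
  define N where "N =
      d1 * ((2 * d1 - d2 - d3) * x1\<^sup>2 - (d2 - d3) * (x2\<^sup>2 - x3\<^sup>2))
    + d2 * ((2 * d2 - d1 - d3) * x2\<^sup>2 - (d1 - d3) * (x1\<^sup>2 - x3\<^sup>2))
    + d3 * ((2 * d3 - d1 - d2) * x3\<^sup>2 - (d1 - d2) * (x1\<^sup>2 - x2\<^sup>2))"
  have pos: "x1 > 0" "x2 > 0" "x3 > 0"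
    unfolding x1_def x2_def x3_def by auto
  have "(G has_real_derivative
        d1 * (((2 * d1 - d2 - d3) * x1\<^sup>2 - (d2 - d3) * (x2\<^sup>2 - x3\<^sup>2)) / sqrt (heron x1 x2 x3))
      + d2 * (((2 * d2 - d1 - d3) * x2\<^sup>2 - (d1 - d3) * (x1\<^sup>2 - x3\<^sup>2)) / sqrt (heron x2 x1 x3))
      + d3 * (((2 * d3 - d1 - d2) * x3\<^sup>2 - (d1 - d2) * (x1\<^sup>2 - x2\<^sup>2)) / sqrt (heron x3 x1 x2))) (at x)"
    unfolding G_def[abs_def] x1_def x2_def x3_def
    by (intro DERIV_add DERIV_cmult has_real_derivative_arccos_cos_angle)
      (use assms(4-6) in \<open>auto simp: x1_def x2_def x3_def\<close>)
  then have G_deriv: "(G has_real_derivative N / sqrt (heron x1 x2 x3)) (at x)"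
    unfolding heron_commute[where a = x1 and b = x2 and c = x3] N_def
    by (simp add: add_divide_distrib)
  have "(angle_pairing v1 v2 v3 d1 d2 d3 has_real_derivative N / sqrt (heron x1 x2 x3)) (at x)"
  proof (rule has_field_derivative_transform_within_open[OF G_deriv])
    let ?U = "{s. exp (v1 + s * d1) < exp (v2 + s * d2) + exp (v3 + s * d3)
                \<and> exp (v2 + s * d2) < exp (v1 + s * d1) + exp (v3 + s * d3)
                \<and> exp (v3 + s * d3) < exp (v1 + s * d1) + exp (v2 + s * d2)}"
    show "open ?U"
      unfolding Collect_conj_eq by (intro open_Int open_Collect_less continuous_intros)
    show "x \<in> ?U"
      using assms(4-6) by (simp add: x1_def x2_def x3_def)
    show "G s = angle_pairing v1 v2 v3 d1 d2 d3 s" if "s \<in> ?U" for s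
      using that ext_angle_nondegenerate
      unfolding G_def angle_pairing_def tri_angle_def by (simp add: add.commute)
  qed
  moreover have "N / sqrt (heron x1 x2 x3) \<ge> 0"
    using angle_jacobian_form_nonneg[OF pos assms(4-6)] heron_pos[OF pos assms(4-6)]
    unfolding N_def by simp
  ultimately show ?thesis
    by blast
qed

definition degenerate_set :: "real \<Rightarrow> real \<Rightarrow> real \<Rightarrow> real \<Rightarrow> real \<Rightarrow> real \<Rightarrow> real set" where
  "degenerate_set va vb vc da db dc =
     {s \<in> {0..1}. exp (vb + s * db) + exp (vc + s * dc) \<le> exp (va + s * da)}"

lemma interior_degenerate_set:
  assumes "x \<in> degenerate_set va vb vc da db dc"
    and "x \<notin> {Inf (degenerate_set va vb vc da db dc), Sup (degenerate_set va vb vc da db dc)}"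
  shows "x \<in> interior (degenerate_set va vb vc da db dc)"
proof (rule interval_mem_interior[OF _ _ assms])
  have "degenerate_set va vb vc da db dc
      = {0..1} \<inter> {s. exp (vb + s * db) + exp (vc + s * dc) \<le> exp (va + s * da)}"
    unfolding degenerate_set_def by blast
  then show "is_interval (degenerate_set va vb vc da db dc)" "bounded (degenerate_set va vb vc da db dc)"
    by (simp_all add: is_interval_Int is_interval_cc is_interval_degenerate bounded_Int)
qed

lemma angle_pairing_nondecreasing:
  "angle_pairing v1 v2 v3 d1 d2 d3 0 \<le> angle_pairing v1 v2 v3 d1 d2 d3 1"
proof -
  define g where "g = angle_pairing v1 v2 v3 d1 d2 d3"
  define Es where "Es = {degenerate_set v1 v2 v3 d1 d2 d3, degenerate_set v2 v1 v3 d2 d1 d3,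
      degenerate_set v3 v1 v2 d3 d1 d2}"
  have "\<forall>s\<in>degenerate_set v1 v2 v3 d1 d2 d3. g s = d1 * pi"
    "\<forall>s\<in>degenerate_set v2 v1 v3 d2 d1 d3. g s = d2 * pi"
    "\<forall>s\<in>degenerate_set v3 v1 v2 d3 d1 d2. g s = d3 * pi"
    unfolding g_def degenerate_set_def using angle_pairing_degenerate by auto
  then have const: "\<exists>c. \<forall>s\<in>E. g s = c" if "E \<in> Es" for E
    using that unfolding Es_def by blast
  (* Away from the endpoints of the three intervals of degenerate parameters, g is either
     locally constant or differentiable at a nondegenerate triangle. *)
  have "g 0 \<le> g 1"
  proof (rule nondecreasing_if_deriv_nonneg_off_finite[where g = g and S = "\<Union>E\<in>Es. {Inf E, Sup E}"])
    show "continuous_on {0..1} g"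
      unfolding g_def using continuous_on_angle_pairing by (rule continuous_on_subset) simp
    show "finite (\<Union>E\<in>Es. {Inf E, Sup E})"
      unfolding Es_def by simp
    fix x
    assume x: "x \<in> {0<..<1} - (\<Union>E\<in>Es. {Inf E, Sup E})"
    show "\<exists>D \<ge> 0. (g has_real_derivative D) (at x)"
    proof (cases "\<exists>E\<in>Es. x \<in> E")
      case True
      then obtain E c where E: "E \<in> Es" "x \<in> E" and g_const: "\<forall>s\<in>E. g s = c"
        using const by blast
      have "x \<notin> {Inf E, Sup E}"
        using x E(1) by blast
      then have "x \<in> interior E"
        using E unfolding Es_def by (auto intro: interior_degenerate_set)
      then have "(g has_real_derivative 0) (at x)"
        using g_const by (intro DERIV_zero_if_const_on) auto
      then show ?thesis
        by blast
    next
      case False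
      moreover have "x \<in> {0..1}"
        using x by simp
      ultimately have "exp (v1 + x * d1) < exp (v2 + x * d2) + exp (v3 + x * d3)"
        "exp (v2 + x * d2) < exp (v1 + x * d1) + exp (v3 + x * d3)"
        "exp (v3 + x * d3) < exp (v1 + x * d1) + exp (v2 + x * d2)"
        unfolding Es_def degenerate_set_def by auto
      then show ?thesis
        unfolding g_def by (rule angle_pairing_deriv_nondegenerate)
    qed
  qed simp
  then show ?thesis
    unfolding g_def .
qed

lemma tri_angle_monotone:
  "(tri_angle u1 u2 u3 - tri_angle v1 v2 v3) * (u1 - v1)
   + (tri_angle u2 u1 u3 - tri_angle v2 v1 v3) * (u2 - v2)
   + (tri_angle u3 u1 u2 - tri_angle v3 v1 v2) * (u3 - v3) \<ge> 0"
  using angle_pairing_nondecreasing[of v1 v2 v3 "u1 - v1" "u2 - v2" "u3 - v3"]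
  unfolding angle_pairing_def by (simp add: algebra_simps)

section \<open>Generalized tetrahedra\<close>

lemma tet_edges_explicit: "tet_edges = {{0,1}, {0,2}, {0,3}, {1,2}, {1,3}, {2,3}}"
proof (intro set_eqI iffI)
  fix s
  assume "s \<in> tet_edges"
  then have "s \<subseteq> {0,1,2,3}" "card s = 2"
    unfolding tet_edges_def by auto
  then obtain a b where "s = {a, b}" "a \<noteq> b" "a \<in> {0,1,2,3}" "b \<in> {0,1,2,3}"
    unfolding card_2_iff by auto
  then show "s \<in> {{0,1}, {0,2}, {0,3}, {1,2}, {1,3}, {2,3}}"
    by (elim insertE emptyE) (simp_all add: insert_commute)
next
  fix s :: "nat set"
  assume "s \<in> {{0,1}, {0,2}, {0,3}, {1,2}, {1,3}, {2,3}}"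
  then show "s \<in> tet_edges"
    unfolding tet_edges_def by auto
qed

lemma finite_tet_edges: "finite tet_edges"
  unfolding tet_edges_explicit by simp

lemma sum_tet_edges:
  "(\<Sum>s\<in>tet_edges. f s) = f {0,1} + f {0,2} + f {0,3} + f {1,2} + f {1,3} + (f {2,3} :: real)"
  unfolding tet_edges_explicit by (simp add: doubleton_eq_iff)

lemma complement_tet_edge:
  assumes "s \<in> tet_edges"
  shows "{..<4} - s \<in> tet_edges"
proof -
  have "s \<subseteq> {..<4}" "card s = 2"
    using assms unfolding tet_edges_def by auto
  moreover have "finite s"
    using \<open>s \<subseteq> {..<4}\<close> finite_subset by blast
  ultimately have "card ({..<4} - s) = 2"
    by (simp add: card_Diff_subset)
  then show ?thesis
    unfolding tet_edges_def by simp
qed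

(* For s = {i, j} with complementary edge {k, h}, this is the logarithm of the side
   e^((l_ij + l_kh)/2) of the generalized triangle of the tetrahedron. *)
definition log_side :: "(nat set \<Rightarrow> real) \<Rightarrow> nat set \<Rightarrow> real" where
  "log_side L s = (L s + L ({..<4} - s)) / 2"

lemma log_side_explicit:
  "log_side L {0,1} = (L {0,1} + L {2,3}) / 2"
  "log_side L {0,2} = (L {0,2} + L {1,3}) / 2"
  "log_side L {0,3} = (L {0,3} + L {1,2}) / 2"
proof -
  have "{..<4::nat} - {0,1} = {2,3}" "{..<4::nat} - {0,2} = {1,3}" "{..<4::nat} - {0,3} = {1,2}"
    by auto
  then show "log_side L {0,1} = (L {0,1} + L {2,3}) / 2"
    "log_side L {0,2} = (L {0,2} + L {1,3}) / 2"
    "log_side L {0,3} = (L {0,3} + L {1,2}) / 2"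
    unfolding log_side_def by simp_all
qed

lemma gen_dihedral_doubleton:
  assumes "a < b" "c < d" "{..<4::nat} - {a, b} = {c, d}"
  shows "gen_dihedral L {a, b} =
    tri_angle ((L {a, b} + L {c, d}) / 2) ((L {a, c} + L {b, d}) / 2) ((L {a, d} + L {b, c}) / 2)"
proof -
  have "Min {a, b} = a" "Max {a, b} = b" "Min {c, d} = c" "Max {c, d} = d"
    using assms(1,2) by auto
  then show ?thesis
    unfolding gen_dihedral_def tri_angle_def Let_def assms(3) by simp
qed

lemma gen_dihedral_eq_tri_angle:
  "gen_dihedral L {0,1} = tri_angle (log_side L {0,1}) (log_side L {0,2}) (log_side L {0,3})"
  "gen_dihedral L {2,3} = tri_angle (log_side L {0,1}) (log_side L {0,2}) (log_side L {0,3})"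
  "gen_dihedral L {0,2} = tri_angle (log_side L {0,2}) (log_side L {0,1}) (log_side L {0,3})"
  "gen_dihedral L {1,3} = tri_angle (log_side L {0,2}) (log_side L {0,1}) (log_side L {0,3})"
  "gen_dihedral L {0,3} = tri_angle (log_side L {0,3}) (log_side L {0,1}) (log_side L {0,2})"
  "gen_dihedral L {1,2} = tri_angle (log_side L {0,3}) (log_side L {0,1}) (log_side L {0,2})"
proof -
  have compl: "{..<4::nat} - {0,1} = {2,3}" "{..<4::nat} - {2,3} = {0,1}" "{..<4::nat} - {0,2} = {1,3}"
    "{..<4::nat} - {1,3} = {0,2}" "{..<4::nat} - {0,3} = {1,2}" "{..<4::nat} - {1,2} = {0,3}"
    by auto
  have swap: "{1,0::nat} = {0,1}" "{2,0::nat} = {0,2}" "{3,0::nat} = {0,3}" "{2,1::nat} = {1,2}"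
    "{3,1::nat} = {1,3}" "{3,2::nat} = {2,3}"
    by auto
  have lt: "(0::nat) < 1" "(0::nat) < 2" "(0::nat) < 3" "(1::nat) < 2" "(1::nat) < 3" "(2::nat) < 3"
    by simp_all
  note angle = gen_dihedral_doubleton[OF lt(1) lt(6) compl(1)]
    gen_dihedral_doubleton[OF lt(6) lt(1) compl(2)]
    gen_dihedral_doubleton[OF lt(2) lt(5) compl(3)]
    gen_dihedral_doubleton[OF lt(5) lt(2) compl(4)]
    gen_dihedral_doubleton[OF lt(3) lt(4) compl(5)]
    gen_dihedral_doubleton[OF lt(4) lt(3) compl(6)]
  show "gen_dihedral L {0,1} = tri_angle (log_side L {0,1}) (log_side L {0,2}) (log_side L {0,3})"
    "gen_dihedral L {2,3} = tri_angle (log_side L {0,1}) (log_side L {0,2}) (log_side L {0,3})"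
    "gen_dihedral L {0,2} = tri_angle (log_side L {0,2}) (log_side L {0,1}) (log_side L {0,3})"
    "gen_dihedral L {1,3} = tri_angle (log_side L {0,2}) (log_side L {0,1}) (log_side L {0,3})"
    "gen_dihedral L {0,3} = tri_angle (log_side L {0,3}) (log_side L {0,1}) (log_side L {0,2})"
    "gen_dihedral L {1,2} = tri_angle (log_side L {0,3}) (log_side L {0,1}) (log_side L {0,2})"
    unfolding log_side_explicit angle swap by (simp_all only: add.commute)
qed

lemma gen_dihedral_weighted_sum:
  "(\<Sum>s\<in>tet_edges. gen_dihedral L s * (\<Sum>a\<in>s. W a)) = pi * (\<Sum>a<4. W a)"
proof -
  have "{..<4::nat} = {0,1,2,3}"
    by auto
  then have vertices: "(\<Sum>a<4. W a) = W 0 + W 1 + W 2 + W 3"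
    by simp
  have "t1 * (W 0 + W 1) + t2 * (W 0 + W 2) + t3 * (W 0 + W 3) + t3 * (W 1 + W 2)
      + t2 * (W 1 + W 3) + t1 * (W 2 + W 3) = (t1 + t2 + t3) * (W 0 + W 1 + W 2 + W 3)" for t1 t2 t3
    by algebra
  then show ?thesis
    unfolding sum_tet_edges gen_dihedral_eq_tri_angle vertices
    by (simp add: tri_angle_sum)
qed

lemma log_side_vertex_shift:
  assumes "\<forall>t\<in>tet_edges. L' t = L t + (\<Sum>a\<in>t. W a)" "s \<in> tet_edges"
  shows "log_side L' s = log_side L s + (\<Sum>a<4. W a) / 2"
proof -
  have "s \<subseteq> {..<4}"
    using assms(2) unfolding tet_edges_def by simp
  then have "(\<Sum>a\<in>s. W a) + (\<Sum>a\<in>{..<4} - s. W a) = (\<Sum>a<4. W a)"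
    by (simp add: sum.subset_diff[of s "{..<4}"] add.commute)
  then show ?thesis
    unfolding log_side_def using assms complement_tet_edge[OF assms(2)] by (simp add: field_simps)
qed

lemma gen_dihedral_vertex_shift:
  assumes "\<forall>t\<in>tet_edges. L' t = L t + (\<Sum>a\<in>t. W a)" "s \<in> tet_edges"
  shows "gen_dihedral L' s = gen_dihedral L s"
proof -
  have "log_side L' t = log_side L t + (\<Sum>a<4. W a) / 2" if "t \<in> {{0,1}, {0,2}, {0,3}}" for t
    using that log_side_vertex_shift[OF assms(1)] unfolding tet_edges_explicit by blast
  then have shift: "log_side L' {0,1} = log_side L {0,1} + (\<Sum>a<4. W a) / 2"
    "log_side L' {0,2} = log_side L {0,2} + (\<Sum>a<4. W a) / 2"
    "log_side L' {0,3} = log_side L {0,3} + (\<Sum>a<4. W a) / 2"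
    by simp_all
  from assms(2) show ?thesis
    unfolding tet_edges_explicit
    by (elim insertE emptyE) (simp_all only: gen_dihedral_eq_tri_angle shift tri_angle_shift)
qed

lemma gen_dihedral_monotone:
  "(\<Sum>s\<in>tet_edges. (gen_dihedral L s - gen_dihedral L' s) * (L s - L' s)) \<ge> 0"
proof -
  have sum_eq: "(\<Sum>s\<in>tet_edges. (gen_dihedral L s - gen_dihedral L' s) * (L s - L' s))
    = 2 * ((tri_angle (log_side L {0,1}) (log_side L {0,2}) (log_side L {0,3})
              - tri_angle (log_side L' {0,1}) (log_side L' {0,2}) (log_side L' {0,3}))
             * (log_side L {0,1} - log_side L' {0,1})
         + (tri_angle (log_side L {0,2}) (log_side L {0,1}) (log_side L {0,3})
              - tri_angle (log_side L' {0,2}) (log_side L' {0,1}) (log_side L' {0,3}))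
             * (log_side L {0,2} - log_side L' {0,2})
         + (tri_angle (log_side L {0,3}) (log_side L {0,1}) (log_side L {0,2})
              - tri_angle (log_side L' {0,3}) (log_side L' {0,1}) (log_side L' {0,2}))
             * (log_side L {0,3} - log_side L' {0,3}))"
    unfolding sum_tet_edges gen_dihedral_eq_tri_angle log_side_explicit by (simp add: field_simps)
  show ?thesis
    unfolding sum_eq by (intro mult_nonneg_nonneg zero_le_numeral tri_angle_monotone)
qed

section \<open>Curvature of a closed pseudo 3-manifold\<close>

lemma closed_pseudo_3_manifold_finite: "closed_pseudo_3_manifold T P \<Longrightarrow> finite T"
  unfolding closed_pseudo_3_manifold_def by simp

lemma rtrancl_sym_Image_eq:
  assumes "(x, y) \<in> (R \<union> R\<inverse>)\<^sup>*"
  shows "(R \<union> R\<inverse>)\<^sup>* `` {x} = (R \<union> R\<inverse>)\<^sup>* `` {y}"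
proof -
  have "(y, x) \<in> ((R \<union> R\<inverse>)\<inverse>)\<^sup>*"
    using assms by (rule rtrancl_converseI)
  moreover have "(R \<union> R\<inverse>)\<inverse> = R \<union> R\<inverse>"
    by auto
  ultimately have "(y, x) \<in> (R \<union> R\<inverse>)\<^sup>*"
    by simp
  then show ?thesis
    using assms by (auto intro: rtrancl_trans)
qed

lemma vclass_pairing:
  assumes "\<sigma> \<in> T" "i < 4" "a < 4" "a \<noteq> i"
  shows "vclass T P (ptet P \<sigma> i) (pmap P \<sigma> i a) = vclass T P \<sigma> a"
proof -
  have "((\<sigma>, a), (ptet P \<sigma> i, pmap P \<sigma> i a)) \<in> vgen T P"
    unfolding vgen_def using assms by blast
  then have "((\<sigma>, a), (ptet P \<sigma> i, pmap P \<sigma> i a)) \<in> vrel T P"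
    unfolding vrel_def by (intro r_into_rtrancl UnI1)
  then show ?thesis
    unfolding vclass_def vrel_def by (metis rtrancl_sym_Image_eq)
qed

definition endpoint_weight :: "'t set \<Rightarrow> 't pairing \<Rightarrow> 't vweight \<Rightarrow> 't \<times> nat set \<Rightarrow> real" where
  "endpoint_weight T P w p = (\<Sum>a\<in>snd p. w (vclass T P (fst p) a))"

lemma endpoint_weight_egen:
  assumes "closed_pseudo_3_manifold T P" "(p, q) \<in> egen T P"
  shows "endpoint_weight T P w p = endpoint_weight T P w q"
proof -
  obtain \<sigma> i a b where pq: "p = (\<sigma>, {a, b})" "q = (ptet P \<sigma> i, {pmap P \<sigma> i a, pmap P \<sigma> i b})"
    and c: "\<sigma> \<in> T" "i < 4" "a < 4" "b < 4" "a \<noteq> b" "a \<noteq> i" "b \<noteq> i"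
    using assms(2) unfolding egen_def by blast
  have "inj_on (pmap P \<sigma> i) ({..<4} - {i})"
    using assms(1) c unfolding closed_pseudo_3_manifold_def by (blast dest: bij_betw_imp_inj_on)
  then have "pmap P \<sigma> i a \<noteq> pmap P \<sigma> i b"
    using c by (auto dest: inj_onD)
  then show ?thesis
    unfolding pq endpoint_weight_def using c by (simp add: vclass_pairing)
qed

lemma endpoint_weight_erel:
  assumes "closed_pseudo_3_manifold T P" "(p, q) \<in> erel T P"
  shows "endpoint_weight T P w p = endpoint_weight T P w q"
  using assms(2) unfolding erel_def
proof (induction rule: rtrancl_induct)
  case (step y z)
  then show ?case
    using endpoint_weight_egen[OF assms(1)] by (metis UnE converseD)
qed simp

(* vact reads the endpoints of e off an arbitrary representative (SOME x. x \<in> e); the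
   gluing maps preserve vertex classes, so every representative gives the same weight. *)
lemma vact_eclass:
  assumes "closed_pseudo_3_manifold T P"
  shows "vact T P w l (eclass T P \<sigma> s) = l (eclass T P \<sigma> s) + (\<Sum>a\<in>s. w (vclass T P \<sigma> a))"
proof -
  define x where "x = (SOME x. x \<in> eclass T P \<sigma> s)"
  have "(\<sigma>, s) \<in> eclass T P \<sigma> s"
    unfolding eclass_def erel_def by simp
  then have "x \<in> eclass T P \<sigma> s"
    unfolding x_def by (rule someI)
  then have "endpoint_weight T P w (\<sigma>, s) = endpoint_weight T P w x"
    unfolding eclass_def by (intro endpoint_weight_erel[OF assms]) simp
  then show ?thesis
    unfolding vact_def Let_def x_def[symmetric] endpoint_weight_def by simp
qed

lemma Edges_eq_image: "Edges T P = (\<lambda>p. eclass T P (fst p) (snd p)) ` (T \<times> tet_edges)"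
  unfolding Edges_def quotient_def eclass_def by auto

lemma finite_Edges: "finite T \<Longrightarrow> finite (Edges T P)"
  unfolding Edges_eq_image using finite_tet_edges by simp

lemma sum_Edges_fibres:
  assumes "finite T"
  shows "(\<Sum>e\<in>Edges T P. \<Sum>p\<in>{(\<sigma>, s). \<sigma> \<in> T \<and> s \<in> tet_edges \<and> eclass T P \<sigma> s = e}. F e p)
       = (\<Sum>p\<in>T \<times> tet_edges. F (eclass T P (fst p) (snd p)) p)"
proof -
  have "(\<Sum>p\<in>T \<times> tet_edges. F (eclass T P (fst p) (snd p)) p) =
    (\<Sum>e\<in>Edges T P. \<Sum>p\<in>{p \<in> T \<times> tet_edges. eclass T P (fst p) (snd p) = e}.
        F (eclass T P (fst p) (snd p)) p)"
    using assms finite_tet_edges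
    by (intro sum.group[symmetric] finite_Edges) (auto simp: Edges_eq_image)
  also have "\<dots> = (\<Sum>e\<in>Edges T P. \<Sum>p\<in>{(\<sigma>, s). \<sigma> \<in> T \<and> s \<in> tet_edges \<and> eclass T P \<sigma> s = e}. F e p)"
    by (intro sum.cong refl) auto
  finally show ?thesis
    by simp
qed

lemma gen_curv_vact:
  assumes "closed_pseudo_3_manifold T P"
  shows "gen_curv T P (vact T P w l) e = gen_curv T P l e"
  unfolding gen_curv_def
proof (intro arg_cong[where f = "\<lambda>x. 2 * pi - x"] sum.cong refl)
  fix p
  assume "p \<in> {(\<sigma>, s). \<sigma> \<in> T \<and> s \<in> tet_edges \<and> eclass T P \<sigma> s = e}"
  then obtain \<sigma> s where p: "p = (\<sigma>, s)" and s: "s \<in> tet_edges"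
    by blast
  have "gen_dihedral (tet_metric T P (vact T P w l) \<sigma>) s = gen_dihedral (tet_metric T P l \<sigma>) s"
    by (rule gen_dihedral_vertex_shift[OF _ s, where W = "\<lambda>a. w (vclass T P \<sigma> a)"])
      (simp add: tet_metric_def vact_eclass[OF assms])
  then show "(case p of (\<sigma>, s) \<Rightarrow> gen_dihedral (tet_metric T P (vact T P w l) \<sigma>) s) =
      (case p of (\<sigma>, s) \<Rightarrow> gen_dihedral (tet_metric T P l \<sigma>) s)"
    unfolding p by simp
qed

lemma inner_gen_curv_vact:
  assumes "closed_pseudo_3_manifold T P"
  shows "(\<Sum>e\<in>Edges T P. gen_curv T P l e * vact T P w (\<lambda>_. 0) e) =
     2 * pi * (\<Sum>e\<in>Edges T P. vact T P w (\<lambda>_. 0) e) - pi * (\<Sum>\<sigma>\<in>T. \<Sum>a<4. w (vclass T P \<sigma> a))"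
proof -
  define c where "c = vact T P w (\<lambda>_. 0)"
  define fib where "fib e = {(\<sigma>, s). \<sigma> \<in> T \<and> s \<in> tet_edges \<and> eclass T P \<sigma> s = e}" for e
  have "(\<Sum>e\<in>Edges T P. gen_curv T P l e * c e) =
     2 * pi * (\<Sum>e\<in>Edges T P. c e) -
     (\<Sum>e\<in>Edges T P. \<Sum>p\<in>fib e. gen_dihedral (tet_metric T P l (fst p)) (snd p) * c e)"
    unfolding gen_curv_def fib_def case_prod_unfold
    by (simp add: left_diff_distrib sum_distrib_right sum_subtractf sum_distrib_left)
  also have "(\<Sum>e\<in>Edges T P. \<Sum>p\<in>fib e. gen_dihedral (tet_metric T P l (fst p)) (snd p) * c e)
     = (\<Sum>p\<in>T \<times> tet_edges. gen_dihedral (tet_metric T P l (fst p)) (snd p) * c (eclass T P (fst p) (snd p)))"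
    unfolding fib_def using closed_pseudo_3_manifold_finite[OF assms] by (rule sum_Edges_fibres)
  also have "\<dots> = (\<Sum>\<sigma>\<in>T. \<Sum>s\<in>tet_edges. gen_dihedral (tet_metric T P l \<sigma>) s * (\<Sum>a\<in>s. w (vclass T P \<sigma> a)))"
    unfolding c_def vact_eclass[OF assms] by (simp add: sum.cartesian_product case_prod_unfold)
  also have "\<dots> = pi * (\<Sum>\<sigma>\<in>T. \<Sum>a<4. w (vclass T P \<sigma> a))"
    by (simp add: gen_dihedral_weighted_sum flip: sum_distrib_left)
  finally show ?thesis
    unfolding c_def .
qed

lemma inner_gen_curv_vact_eq_zero:
  assumes "closed_pseudo_3_manifold T P" "zero_curvature T P l'"
  shows "(\<Sum>e\<in>Edges T P. gen_curv T P l e * vact T P w (\<lambda>_. 0) e) = 0"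
proof -
  have "(\<Sum>e\<in>Edges T P. gen_curv T P l e * vact T P w (\<lambda>_. 0) e)
      = (\<Sum>e\<in>Edges T P. gen_curv T P l' e * vact T P w (\<lambda>_. 0) e)"
    unfolding inner_gen_curv_vact[OF assms(1)] ..
  also have "\<dots> = 0"
    using assms(2) unfolding zero_curvature_def by simp
  finally show ?thesis .
qed

lemma gen_curv_antimonotone:
  assumes "closed_pseudo_3_manifold T P"
  shows "(\<Sum>e\<in>Edges T P. (gen_curv T P x e - gen_curv T P y e) * (x e - y e)) \<le> 0"
proof -
  define fib where "fib e = {(\<sigma>, s). \<sigma> \<in> T \<and> s \<in> tet_edges \<and> eclass T P \<sigma> s = e}" for e
  define D where "D p = gen_dihedral (tet_metric T P y (fst p)) (snd p)
      - gen_dihedral (tet_metric T P x (fst p)) (snd p)" for p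
  have "(\<Sum>e\<in>Edges T P. (gen_curv T P x e - gen_curv T P y e) * (x e - y e))
      = (\<Sum>e\<in>Edges T P. \<Sum>p\<in>fib e. D p * (x e - y e))"
    unfolding gen_curv_def fib_def case_prod_unfold D_def
    by (simp add: sum_subtractf[symmetric] sum_distrib_right)
  also have "\<dots> = (\<Sum>p\<in>T \<times> tet_edges. D p * (x (eclass T P (fst p) (snd p)) - y (eclass T P (fst p) (snd p))))"
    unfolding fib_def using closed_pseudo_3_manifold_finite[OF assms] by (rule sum_Edges_fibres)
  also have "\<dots> = - (\<Sum>\<sigma>\<in>T. \<Sum>s\<in>tet_edges.
      (gen_dihedral (tet_metric T P x \<sigma>) s - gen_dihedral (tet_metric T P y \<sigma>) s)
        * (tet_metric T P x \<sigma> s - tet_metric T P y \<sigma> s))"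
    unfolding D_def tet_metric_def
    by (simp add: sum.cartesian_product case_prod_unfold sum_negf[symmetric] algebra_simps)
  also have "\<dots> \<le> 0"
    using gen_dihedral_monotone by (simp add: sum_nonneg)
  finally show ?thesis .
qed

section \<open>The extended Ricci flow\<close>

lemma flow_unique_if_antimonotone:
  fixes F :: "('i \<Rightarrow> real) \<Rightarrow> 'i \<Rightarrow> real" and x y :: "real \<Rightarrow> 'i \<Rightarrow> real"
  assumes "finite I"
    and mono: "\<And>p q. (\<Sum>i\<in>I. (F p i - F q i) * (p i - q i)) \<le> 0"
    and x: "\<And>i t. i \<in> I \<Longrightarrow> t \<ge> 0 \<Longrightarrow> ((\<lambda>s. x s i) has_real_derivative F (x t) i) (at t within {0..})"
    and y: "\<And>i t. i \<in> I \<Longrightarrow> t \<ge> 0 \<Longrightarrow> ((\<lambda>s. y s i) has_real_derivative F (y t) i) (at t within {0..})"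
    and "\<forall>i\<in>I. x 0 i = y 0 i" "t \<ge> 0" "i \<in> I"
  shows "x t i = y t i"
proof -
  define D where "D s = (\<Sum>i\<in>I. (x s i - y s i)\<^sup>2)" for s
  have "D t \<le> D 0"
  proof (rule nonincreasing_if_deriv_nonpos[OF \<open>t \<ge> 0\<close>])
    fix s
    assume s: "s \<in> {0..t}"
    have "((\<lambda>s. (x s j - y s j)\<^sup>2) has_real_derivative
        2 * ((F (x s) j - F (y s) j) * (x s j - y s j))) (at s within {0..})" if "j \<in> I" for j
      using DERIV_power[OF DERIV_diff[OF x[OF that] y[OF that]], of s 2] s by simp
    then have "(D has_real_derivative (\<Sum>i\<in>I. 2 * ((F (x s) i - F (y s) i) * (x s i - y s i))))
        (at s within {0..})"
      unfolding D_def by (rule DERIV_sum)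
    then show "(D has_real_derivative (\<Sum>i\<in>I. 2 * ((F (x s) i - F (y s) i) * (x s i - y s i))))
        (at s within {0..t})"
      by (rule DERIV_subset) auto
    show "(\<Sum>i\<in>I. 2 * ((F (x s) i - F (y s) i) * (x s i - y s i))) \<le> 0"
      using mono[of "x s" "y s"] by (simp add: sum_distrib_left[symmetric])
  qed
  also have "D 0 = 0"
    unfolding D_def using assms(5) by simp
  finally have "(\<Sum>i\<in>I. (x t i - y t i)\<^sup>2) = 0"
    unfolding D_def by (simp add: antisym sum_nonneg)
  then show ?thesis
    using \<open>finite I\<close> \<open>i \<in> I\<close> by (simp add: sum_nonneg_eq_0_iff)
qed

lemma flow_inner_const:
  fixes F :: "('i \<Rightarrow> real) \<Rightarrow> 'i \<Rightarrow> real" and x :: "real \<Rightarrow> 'i \<Rightarrow> real"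
  assumes "\<And>p. (\<Sum>i\<in>I. F p i * c i) = 0"
    and x: "\<And>i t. i \<in> I \<Longrightarrow> t \<ge> 0 \<Longrightarrow> ((\<lambda>s. x s i) has_real_derivative F (x t) i) (at t within {0..})"
    and "t \<ge> 0"
  shows "(\<Sum>i\<in>I. x t i * c i) = (\<Sum>i\<in>I. x 0 i * c i)"
proof -
  have "((\<lambda>s. \<Sum>i\<in>I. x s i * c i) has_real_derivative (\<Sum>i\<in>I. F (x s) i * c i))
      (at s within {0..})" if "s \<in> {0..}" for s
    using that by (intro DERIV_sum DERIV_cmult_right x) auto
  then have "((\<lambda>s. \<Sum>i\<in>I. x s i * c i) has_real_derivative 0) (at s within {0..})" if "s \<in> {0..}" for s
    using that unfolding assms(1) .
  then obtain k where "\<forall>s\<in>{0..}. (\<Sum>i\<in>I. x s i * c i) = k"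
    using has_field_derivative_zero_constant[OF convex_real_interval(1)] by blast
  then show ?thesis
    using \<open>t \<ge> 0\<close> by simp
qed

lemma ext_ricci_flow_solution_vact:
  assumes "closed_pseudo_3_manifold T P" "ext_ricci_flow_solution T P l l0"
  shows "ext_ricci_flow_solution T P (\<lambda>t. vact T P w (l t)) (vact T P w l0)"
  unfolding ext_ricci_flow_solution_def gen_curv_vact[OF assms(1)]
proof (intro conjI ballI allI impI)
  fix e
  assume e: "e \<in> Edges T P"
  then show "vact T P w (l 0) e = vact T P w l0 e"
    using assms(2) unfolding ext_ricci_flow_solution_def vact_def by simp
  fix t :: real
  assume "t \<ge> 0"
  then show "((\<lambda>s. vact T P w (l s) e) has_real_derivative gen_curv T P (l t) e) (at t within {0..})"
    using assms(2) e unfolding ext_ricci_flow_solution_def vact_def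
    by (auto intro!: derivative_eq_intros)
qed

lemma ext_ricci_flow_unique:
  assumes "closed_pseudo_3_manifold T P"
    and "ext_ricci_flow_solution T P l l0" "ext_ricci_flow_solution T P l' l0'"
    and "\<forall>e\<in>Edges T P. l0 e = l0' e" "t \<ge> 0" "e \<in> Edges T P"
  shows "l t e = l' t e"
proof (rule flow_unique_if_antimonotone[where F = "gen_curv T P" and x = l and y = l'])
  show "finite (Edges T P)"
    using closed_pseudo_3_manifold_finite[OF assms(1)] by (rule finite_Edges)
  show "(\<Sum>e\<in>Edges T P. (gen_curv T P p e - gen_curv T P q e) * (p e - q e)) \<le> 0" for p q
    using assms(1) by (rule gen_curv_antimonotone)
qed (use assms(2-) in \<open>auto simp: ext_ricci_flow_solution_def\<close>)

lemma ext_ricci_flow_in_quot_space: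
  assumes "closed_pseudo_3_manifold T P" "\<exists>l. zero_curvature T P l"
    and "in_quot_space T P l0" "ext_ricci_flow_solution T P l l0" "t \<ge> 0"
  shows "in_quot_space T P (l t)"
  unfolding in_quot_space_def
proof
  fix w
  obtain lz where "zero_curvature T P lz"
    using assms(2) by blast
  have "(\<Sum>e\<in>Edges T P. l t e * vact T P w (\<lambda>_. 0) e) = (\<Sum>e\<in>Edges T P. l 0 e * vact T P w (\<lambda>_. 0) e)"
    using assms(4,5) inner_gen_curv_vact_eq_zero[OF assms(1) \<open>zero_curvature T P lz\<close>]
    by (intro flow_inner_const[where F = "gen_curv T P"]) (auto simp: ext_ricci_flow_solution_def)
  also have "\<dots> = (\<Sum>e\<in>Edges T P. l0 e * vact T P w (\<lambda>_. 0) e)"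
    using assms(4) unfolding ext_ricci_flow_solution_def by simp
  also have "\<dots> = 0"
    using assms(3) unfolding in_quot_space_def by blast
  finally show "(\<Sum>e\<in>Edges T P. l t e * vact T P w (\<lambda>_. 0) e) = 0" .
qed

theorem mainTheorem9:
  fixes T :: "'t set" and P :: "'t pairing"
    and l0 l0T :: "'t emetric" and w :: "'t vweight"
  assumes "closed_pseudo_3_manifold T P"
    and "\<exists>l. zero_curvature T P l"
    and "in_quot_space T P l0T"
    and "\<forall>e\<in>Edges T P. l0 e = vact T P w l0T e"
  shows "\<forall>l lT. ext_ricci_flow_solution T P l l0 \<and> ext_ricci_flow_solution T P lT l0T \<longrightarrow>
           (\<forall>t\<ge>0. (\<forall>e\<in>Edges T P. l t e = vact T P w (lT t) e) \<and> in_quot_space T P (lT t))"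
proof (intro allI impI)
  fix l lT and t :: real
  assume "ext_ricci_flow_solution T P l l0 \<and> ext_ricci_flow_solution T P lT l0T" and t: "t \<ge> 0"
  then have l: "ext_ricci_flow_solution T P l l0" and lT: "ext_ricci_flow_solution T P lT l0T"
    by simp_all
  have "\<forall>e\<in>Edges T P. l t e = vact T P w (lT t) e"
    using ext_ricci_flow_unique[OF assms(1) l ext_ricci_flow_solution_vact[OF assms(1) lT] assms(4) t]
    by blast
  moreover have "in_quot_space T P (lT t)"
    using assms(1-3) lT t by (rule ext_ricci_flow_in_quot_space)
  ultimately show "(\<forall>e\<in>Edges T P. l t e = vact T P w (lT t) e) \<and> in_quot_space T P (lT t)"
    by blast
qed

end
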